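(* Let $n,m\ge0$ be integers. There exists a nonempty finite multiset $S$ of pairs $(i,j)$ with $0\le i\le n$ and $0\le j\le m$ such that: (1) for each $d\in\{0,1,\dots,n+m\}$ the number of elements of $S$ with $i+j=d$ equals $|S|/(n+m+1)$; (2) for each $i\in\{0,\dots,n\}$ the number of elements of $S$ with first coordinate $i$ equals $|S|/(n+1)$; (3) for each $j\in\{0,\dots,m\}$ the number of elements of $S$ with second coordinate $j$ equals $|S|/(m+1)$.
   Context: Here $S$ is a multiset: pairs may be repeated, and counts include multiplicities. (Equivalently, $S$ is a multiset of quadratic monomials $x_iy_j$ in weighted variables with $\deg x_i=i$, $\deg y_j=j$ in which every degree in $[0,n+m]$, every $x_i$, and every $y_j$ occurs equally often.) *)

theory Defs
  imports Complex_Main "HOL-Library.Multiset"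
begin

end

theory Submission
  imports Defs
begin

text \<open>
  The witness is the multiset of all lattice points visited by all monotone lattice
  paths from (0,0) to (n,m), counted with multiplicity.  Each path meets every
  antidiagonal i + j = d exactly once, so the antidiagonal counts are uniform; by the
  symmetry of paths the row and column counts are uniform as well.

  Instead of enumerating paths we build this multiset recursively ("path_points"):
  a path to (n+1,m+1) ends with a horizontal or a vertical step, so the points of all
  such paths are (0,0) taken once per path, plus the shifted points of the paths to
  (n,m+1) and to (n+1,m).  The total size is obtained by
  summing the antidiagonal fibres; the absorption identity for binomials rewrites it
  as (number of columns) * (column count), and the theorem follows.
\<close>

lemma size_eq_sum_fibres:
  assumes "finite A" and "\<forall>x \<in># M. f x \<in> A"
  shows "size M = (\<Sum>d\<in>A. size (filter_mset (\<lambda>x. f x = d) M))"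
  using assms(2)
proof (induction M)
  case empty
  then show ?case by simp
next
  case (add x M)
  have "size (filter_mset (\<lambda>y. f y = d) (add_mset x M))
      = size (filter_mset (\<lambda>y. f y = d) M) + (if f x = d then 1 else 0)" for d
    by simp
  then have "(\<Sum>d\<in>A. size (filter_mset (\<lambda>y. f y = d) (add_mset x M)))
      = (\<Sum>d\<in>A. size (filter_mset (\<lambda>y. f y = d) M)) + (\<Sum>d\<in>A. if f x = d then 1 else 0)"
    by (simp only: sum.distrib)
  also have "(\<Sum>d\<in>A. if f x = d then 1 else 0) = (1::nat)"
    using add.prems assms(1) by (simp add: sum.delta)
  finally show ?case using add by simp
qed

lemma size_filter_replicate_mset:
  "size (filter_mset Q (replicate_mset k x)) = (if Q x then k else 0)"
  by (induction k) auto

lemma size_filter_image_mset: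
  "size (filter_mset Q (image_mset f M)) = size (filter_mset (\<lambda>x. Q (f x)) M)"
  by (simp add: filter_mset_image_mset)

text \<open>
  The points of all monotone lattice paths from (0,0) to (n,m), with multiplicity.
  The number of such paths ending in (n+1,m+1) is (n+m+2 choose n+1), which is how
  often the starting point (0,0) is counted.
\<close>
fun path_points :: "nat \<Rightarrow> nat \<Rightarrow> (nat \<times> nat) multiset" where
  "path_points 0 0 = {#(0, 0)#}"
| "path_points (Suc n) 0 = add_mset (0, 0) (image_mset (apfst Suc) (path_points n 0))"
| "path_points 0 (Suc m) = add_mset (0, 0) (image_mset (apsnd Suc) (path_points 0 m))"
| "path_points (Suc n) (Suc m) =
     replicate_mset (Suc n + Suc m choose Suc n) (0, 0)
     + image_mset (apfst Suc) (path_points n (Suc m))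
     + image_mset (apsnd Suc) (path_points (Suc n) m)"

lemma path_points_in_box: "p \<in># path_points n m \<Longrightarrow> fst p \<le> n \<and> snd p \<le> m"
  by (induction n m arbitrary: p rule: path_points.induct) auto

lemma swap_comp_shift:
  "prod.swap \<circ> apfst Suc = apsnd Suc \<circ> prod.swap"
  "prod.swap \<circ> apsnd Suc = apfst Suc \<circ> prod.swap"
  by (auto simp: fun_eq_iff)

lemma path_points_swap: "image_mset prod.swap (path_points n m) = path_points m n"
proof (induction n m rule: path_points.induct)
  case 1
  then show ?case by simp
next
  case (2 n)
  then show ?case
    by (simp add: image_mset.compositionality swap_comp_shift flip: 2)
next
  case (3 m)
  then show ?case
    by (simp add: image_mset.compositionality swap_comp_shift flip: 3)
next
  case (4 n m)
  have paths: "Suc n + Suc m choose Suc n = Suc m + Suc n choose Suc m"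
    using binomial_symmetric[of "Suc n" "Suc n + Suc m"] by (simp add: add.commute)
  have "image_mset prod.swap (path_points (Suc n) (Suc m))
      = replicate_mset (Suc m + Suc n choose Suc m) (0, 0)
        + image_mset (apsnd Suc) (image_mset prod.swap (path_points n (Suc m)))
        + image_mset (apfst Suc) (image_mset prod.swap (path_points (Suc n) m))"
    by (simp only: path_points.simps image_mset_union image_replicate_mset paths
        image_mset.compositionality swap_comp_shift) simp
  also have "\<dots> = path_points (Suc m) (Suc n)"
    by (simp only: 4 path_points.simps add_ac)
  finally show ?case .
qed

text \<open>Every path meets each antidiagonal once, so there are (n+m choose n) points on each.\<close>
lemma path_points_antidiagonal:
  "d \<le> n + m \<Longrightarrow>
     size (filter_mset (\<lambda>p. fst p + snd p = d) (path_points n m)) = n + m choose n"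
proof (induction n m arbitrary: d rule: path_points.induct)
  case 1
  then show ?case by simp
next
  case (2 n)
  then show ?case by (cases d) (simp_all add: size_filter_image_mset)
next
  case (3 m)
  then show ?case by (cases d) (simp_all add: size_filter_image_mset)
next
  case (4 n m)
  show ?case
  proof (cases d)
    case 0
    then show ?thesis by (simp add: size_filter_image_mset size_filter_replicate_mset)
  next
    case (Suc e)
    with 4 have "size (filter_mset (\<lambda>p. fst p + snd p = e) (path_points n (Suc m)))
                   = n + Suc m choose n"
      and "size (filter_mset (\<lambda>p. fst p + snd p = e) (path_points (Suc n) m))
                   = Suc n + m choose Suc n"
      by simp_all
    with Suc show ?thesis by (simp add: size_filter_image_mset size_filter_replicate_mset)
  qed
qed

lemma path_points_column:
  "i \<le> n \<Longrightarrow> size (filter_mset (\<lambda>p. fst p = i) (path_points n m)) = n + m + 1 choose (n + 1)"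
proof (induction n m arbitrary: i rule: path_points.induct)
  case 1
  then show ?case by simp
next
  case (2 n)
  then show ?case by (cases i) (simp_all add: size_filter_image_mset)
next
  case (3 m)
  then show ?case by (simp add: size_filter_image_mset)
next
  case (4 n m)
  have right: "size (filter_mset (\<lambda>p. fst p = i) (path_points (Suc n) m))
                 = Suc n + m + 1 choose Suc (Suc n)"
    using 4 by simp
  show ?case
  proof (cases i)
    case 0
    with right show ?thesis by (simp add: size_filter_image_mset size_filter_replicate_mset)
  next
    case (Suc e)
    with 4 have "size (filter_mset (\<lambda>p. fst p = e) (path_points n (Suc m)))
                   = n + Suc m + 1 choose Suc n"
      by simp
    with right Suc show ?thesis
      by (simp add: size_filter_image_mset size_filter_replicate_mset)
  qed
qed

lemma path_points_row:
  assumes "j \<le> m"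
  shows "size (filter_mset (\<lambda>p. snd p = j) (path_points n m)) = n + m + 1 choose (m + 1)"
proof -
  have "size (filter_mset (\<lambda>p. snd p = j) (path_points n m))
      = size (filter_mset (\<lambda>p. fst p = j) (path_points m n))"
    by (simp add: size_filter_image_mset flip: path_points_swap[of m n])
  also have "\<dots> = n + m + 1 choose (m + 1)"
    using path_points_column[OF assms] by (simp add: add.commute)
  finally show ?thesis .
qed

lemma size_path_points: "size (path_points n m) = (n + m + 1) * (n + m choose n)"
proof -
  have "size (path_points n m)
      = (\<Sum>d\<le>n + m. size (filter_mset (\<lambda>p. fst p + snd p = d) (path_points n m)))"
    by (rule size_eq_sum_fibres) (auto dest: path_points_in_box)
  also have "\<dots> = (\<Sum>d\<le>n + m. n + m choose n)"
    by (simp add: path_points_antidiagonal)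
  finally show ?thesis by simp
qed

lemma size_path_points_by_columns:
  "size (path_points n m) = (n + 1) * (n + m + 1 choose (n + 1))"
  using size_path_points[of n m] Suc_times_binomial[of n "n + m"] by simp

lemma size_path_points_by_rows:
  "size (path_points n m) = (m + 1) * (n + m + 1 choose (m + 1))"
proof -
  have "size (path_points n m) = size (path_points m n)"
    by (metis path_points_swap size_image_mset)
  then show ?thesis
    by (simp only: size_path_points_by_columns add.commute)
qed

lemma fraction_of_size:
  assumes "size S = k * c" and "k > 0"
  shows "real c = real (size S) / real k"
  using assms by simp

theorem lemma6p6:
  fixes n m :: nat
  shows "\<exists>S :: (nat \<times> nat) multiset.
           S \<noteq> {#} \<and>
           (\<forall>p \<in># S. fst p \<le> n \<and> snd p \<le> m) \<and>
           (\<forall>d \<le> n + m. real (size (filter_mset (\<lambda>p. fst p + snd p = d) S)) = real (size S) / real (n + m + 1)) \<and>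
           (\<forall>i \<le> n. real (size (filter_mset (\<lambda>p. fst p = i) S)) = real (size S) / real (n + 1)) \<and>
           (\<forall>j \<le> m. real (size (filter_mset (\<lambda>p. snd p = j) S)) = real (size S) / real (m + 1))"
proof (intro exI conjI allI impI)
  let ?S = "path_points n m"
  show "?S \<noteq> {#}"
    using size_path_points[of n m] by auto
  show "\<forall>p \<in># ?S. fst p \<le> n \<and> snd p \<le> m"
    using path_points_in_box by blast
  show "real (size (filter_mset (\<lambda>p. fst p + snd p = d) ?S)) = real (size ?S) / real (n + m + 1)"
    if "d \<le> n + m" for d
    unfolding path_points_antidiagonal[OF that]
    by (rule fraction_of_size[OF size_path_points]) simp
  show "real (size (filter_mset (\<lambda>p. fst p = i) ?S)) = real (size ?S) / real (n + 1)"
    if "i \<le> n" for i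
    unfolding path_points_column[OF that]
    by (rule fraction_of_size[OF size_path_points_by_columns]) simp
  show "real (size (filter_mset (\<lambda>p. snd p = j) ?S)) = real (size ?S) / real (m + 1)"
    if "j \<le> m" for j
    unfolding path_points_row[OF that]
    by (rule fraction_of_size[OF size_path_points_by_rows]) simp
qed

end
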